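(* Let $p,q,p',q'\in(0,1/2)$, suppose $K_{pq}$ and $K_{p'q'}$ are twofold Cantor sets, and let $f:K_{pq}\to K_{p'q'}$ be a homeomorphism with $f(S_i(x))=S_i'(f(x))$ for all $x\in K_{pq}$ and $i\in\{1,2,3,4\}$. Then $f$ extends to a homeomorphism $\tilde f:\mathbb C\to\mathbb C$. Moreover, if some such extension $\tilde f$ satisfies $\tilde f\circ S_i(z)=S_i'\circ\tilde f(z)$ for all $z\in\mathbb C$ and all $i\in\{1,2,3,4\}$, then $(p,q)=(p',q')$.
   Context: For $p,q\in(0,1/2)$ let $S_1(z)=pz$, $S_2(z)=qz$, $S_3(z)=pz+1-p$, $S_4(z)=qz+1-q$ (maps of $\mathbb R$, also regarded as maps of $\mathbb C$ by the same formulas), let $K_{pq}\subset\mathbb R\subset\mathbb C$ be the attractor of $\{S_1,S_2,S_3,S_4\}$ (the unique nonempty compact $K$ with $K=\bigcup_{i=1}^4S_i(K)$), and let $A=S_3(K_{pq})\cup S_4(K_{pq})$. $K_{pq}$ is called a twofold Cantor set if $S_1^m(A)\cap S_2^n(A)=\varnothing$ for all $m,n\in\mathbb N$. The maps $S_i'$ are defined in the same way with $p',q'$ in place of $p,q$. *)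

theory Defs
  imports "HOL-Analysis.Analysis"
begin

definition IFSmap :: "real \<Rightarrow> real \<Rightarrow> nat \<Rightarrow> 'a::real_algebra_1 \<Rightarrow> 'a" where
  "IFSmap p q i z =
     (if i = 1 then of_real p * z
      else if i = 2 then of_real q * z
      else if i = 3 then of_real p * z + of_real (1 - p)
      else of_real q * z + of_real (1 - q))"

definition attractor :: "real \<Rightarrow> real \<Rightarrow> real set" where
  "attractor p q = (THE K. K \<noteq> {} \<and> compact K \<and>
      K = (\<Union>i\<in>{1..4::nat}. IFSmap p q i ` K))"

definition twofold_Cantor :: "real \<Rightarrow> real \<Rightarrow> bool" where
  "twofold_Cantor p q \<longleftrightarrow>
     (let K = attractor p q;
          A = IFSmap p q 3 ` K \<union> IFSmap p q 4 ` K
      in \<forall>m n::nat. m \<ge> 1 \<longrightarrow> n \<ge> 1 \<longrightarrow>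
           (IFSmap p q 1 ^^ m) ` A \<inter> (IFSmap p q 2 ^^ n) ` A = {})"

end

theory Submission
  imports Defs
begin

text \<open>The attractor is the closure of the orbit of \<open>0\<close> (the fixed point of \<open>S\<^sub>1\<close>) under
  the maps \<open>S\<^sub>i\<close>, so it is closed, and a homeomorphism between closed subsets of the real
  line extends to the plane by Klee's trick applied to Tietze extensions of \<open>f\<close> and
  \<open>f\<^sup>-\<^sup>1\<close>. For the rigidity part, a homeomorphism \<open>F\<close> of the plane with
  \<open>F \<circ> S\<^sub>1 = S\<^sub>1' \<circ> F\<close> and \<open>F \<circ> S\<^sub>3 = S\<^sub>3' \<circ> F\<close> fixes \<open>0\<close> and turns translation by \<open>1 - p\<close>
  into translation by \<open>1 - p'\<close>, and boundedness of \<open>F\<close> on the unit disc then forces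
  \<open>p' \<le> p\<close>. Applying this to \<open>F\<^sup>-\<^sup>1\<close> and to \<open>S\<^sub>2, S\<^sub>4\<close> gives \<open>(p, q) = (p', q')\<close>.\<close>

lemma IFSmap_real:
  "IFSmap p q i (x::real) =
     (if i = 1 then p * x else if i = 2 then q * x
      else if i = 3 then p * x + (1 - p) else q * x + (1 - q))"
  by (simp add: IFSmap_def)

lemma IFSmap_contraction:
  assumes "p \<in> {0..1/2}" "q \<in> {0..1/2}"
  shows "\<bar>IFSmap p q i x - IFSmap p q i (y::real)\<bar> \<le> \<bar>x - y\<bar> / 2"
proof -
  have "\<bar>c * x - c * y\<bar> \<le> \<bar>x - y\<bar> / 2" if "c \<in> {0..1/2}" for c
  proof -
    have "\<bar>c * x - c * y\<bar> = c * \<bar>x - y\<bar>"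
      using that by (simp add: abs_mult flip: right_diff_distrib)
    also have "\<dots> \<le> \<bar>x - y\<bar> / 2"
      using that mult_right_mono[of c "1/2" "\<bar>x - y\<bar>"] by simp
    finally show ?thesis .
  qed
  then show ?thesis
    using assms by (simp add: IFSmap_real)
qed

lemma IFSmap_unit_interval:
  assumes "p \<in> {0..1}" "q \<in> {0..1}" "x \<in> {0..1::real}"
  shows "IFSmap p q i x \<in> {0..1}"
  using assms by (auto simp: IFSmap_real mult_le_one mult_left_le)

lemma continuous_on_IFSmap: "continuous_on A (IFSmap p q i :: real \<Rightarrow> real)"
  unfolding IFSmap_real
  by (cases "i = 1"; cases "i = 2"; cases "i = 3") (auto intro!: continuous_intros)

inductive_set IFS_orbit :: "real \<Rightarrow> real \<Rightarrow> real set" for p q where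
  zero: "0 \<in> IFS_orbit p q"
| step: "x \<in> IFS_orbit p q \<Longrightarrow> i \<in> {1..4::nat} \<Longrightarrow> IFSmap p q i x \<in> IFS_orbit p q"

lemma IFS_orbit_subset_unit_interval:
  assumes "p \<in> {0..1}" "q \<in> {0..1}"
  shows "IFS_orbit p q \<subseteq> {0..1}"
proof
  fix x assume "x \<in> IFS_orbit p q"
  then show "x \<in> {0..1}"
    by induction (use IFSmap_unit_interval[OF assms] in auto)
qed

lemma compact_closure_IFS_orbit:
  assumes "p \<in> {0..1}" "q \<in> {0..1}"
  shows "compact (closure (IFS_orbit p q))"
  using IFS_orbit_subset_unit_interval[OF assms]
  by (simp add: bounded_subset[OF bounded_closed_interval])

lemma mem_closure_if_geometric_approx:
  assumes "\<And>n. \<exists>w\<in>S. \<bar>y - w\<bar> \<le> B * (1/2) ^ n"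
  shows "y \<in> closure (S::real set)"
proof (unfold closure_approachable, intro allI impI)
  fix e :: real assume "e > 0"
  have "(\<lambda>n. B * (1/2::real) ^ n) \<longlonglongrightarrow> 0"
    by (intro tendsto_mult_right_zero LIMSEQ_realpow_zero) auto
  then have "eventually (\<lambda>n. B * (1/2) ^ n < e) sequentially"
    using \<open>e > 0\<close> by (rule order_tendstoD(2))
  then obtain n where "B * (1/2) ^ n < e"
    unfolding eventually_sequentially by blast
  moreover obtain w where "w \<in> S" "\<bar>y - w\<bar> \<le> B * (1/2) ^ n"
    using assms by blast
  ultimately show "\<exists>w\<in>S. dist w y < e"
    by (intro bexI[of _ w]) (auto simp: dist_real_def abs_minus_commute)
qed

lemma zero_mem_if_scaling_invariant:
  fixes K :: "real set"
  assumes p: "p \<in> {0..1/2}" and K: "K \<noteq> {}" "compact K"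
    and inv: "\<And>x. x \<in> K \<Longrightarrow> p * x \<in> K"
  shows "0 \<in> K"
proof -
  obtain B where B: "\<And>x. x \<in> K \<Longrightarrow> \<bar>x\<bar> \<le> B"
    using compact_imp_bounded[OF K(2)] by (auto simp: bounded_real)
  obtain x where x: "x \<in> K"
    using K(1) by blast
  have "p ^ n * x \<in> K" for n
    by (induction n) (use x inv in \<open>auto simp: mult.assoc\<close>)
  moreover have "\<bar>0 - p ^ n * x\<bar> \<le> B * (1/2) ^ n" for n
  proof -
    have "\<bar>0 - p ^ n * x\<bar> = p ^ n * \<bar>x\<bar>"
      using p by (simp add: abs_mult)
    also have "\<dots> \<le> (1/2) ^ n * B"
      using p B[OF x] by (intro mult_mono power_mono) auto
    finally show ?thesis
      by (simp add: mult.commute)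
  qed
  ultimately have "0 \<in> closure K"
    by (intro mem_closure_if_geometric_approx) blast
  then show ?thesis
    using K(2) by (simp add: compact_imp_closed)
qed

lemma IFS_invariant_compact_eq_closure_orbit:
  assumes pq: "p \<in> {0..1/2}" "q \<in> {0..1/2}"
    and K: "K \<noteq> {}" "compact K" "K = (\<Union>i\<in>{1..4::nat}. IFSmap p q i ` K)"
  shows "K = closure (IFS_orbit p q)"
proof
  have inv: "IFSmap p q i x \<in> K" if "x \<in> K" "i \<in> {1..4}" for i x
    using K(3) that by blast
  have "0 \<in> K"
    by (rule zero_mem_if_scaling_invariant[OF pq(1) K(1,2)])
      (use inv[of _ 1] in \<open>auto simp: IFSmap_real\<close>)
  have "IFS_orbit p q \<subseteq> K"
  proof
    fix x assume "x \<in> IFS_orbit p q"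
    then show "x \<in> K"
      by induction (use \<open>0 \<in> K\<close> inv in auto)
  qed
  then show "closure (IFS_orbit p q) \<subseteq> K"
    using K(2) by (simp add: closure_minimal compact_imp_closed)
  obtain B where B: "\<And>x. x \<in> K \<Longrightarrow> \<bar>x\<bar> \<le> B"
    using compact_imp_bounded[OF K(2)] by (auto simp: bounded_real)
  have approx: "\<exists>w\<in>IFS_orbit p q. \<bar>y - w\<bar> \<le> B * (1/2) ^ n" if "y \<in> K" for y n
    using that
  proof (induction n arbitrary: y)
    case 0
    then show ?case
      using B IFS_orbit.zero by force
  next
    case (Suc n)
    then obtain i z where iz: "i \<in> {1..4}" "z \<in> K" "y = IFSmap p q i z"
      using K(3) by blast
    obtain w where w: "w \<in> IFS_orbit p q" "\<bar>z - w\<bar> \<le> B * (1/2) ^ n"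
      using Suc.IH[OF iz(2)] by blast
    have "\<bar>y - IFSmap p q i w\<bar> \<le> B * (1/2) ^ Suc n"
      using IFSmap_contraction[OF pq, of i z w] w(2) iz(3) by simp
    with IFS_orbit.step[OF w(1) iz(1)] show ?case
      by blast
  qed
  show "K \<subseteq> closure (IFS_orbit p q)"
    using approx mem_closure_if_geometric_approx by blast
qed

lemma closure_IFS_orbit_invariant:
  assumes "p \<in> {0..1}" "q \<in> {0..1}"
  shows "closure (IFS_orbit p q) = (\<Union>i\<in>{1..4::nat}. IFSmap p q i ` closure (IFS_orbit p q))"
    (is "?K = ?U")
proof
  show "?U \<subseteq> ?K"
  proof (intro UN_least image_closure_subset)
    fix i :: nat assume "i \<in> {1..4}"
    then show "IFSmap p q i ` IFS_orbit p q \<subseteq> ?K"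
      using IFS_orbit.step closure_subset by blast
  qed (auto intro: continuous_on_IFSmap)
  have "compact ?K"
    by (rule compact_closure_IFS_orbit[OF assms])
  then have "closed ?U"
    by (intro compact_imp_closed compact_UN compact_continuous_image continuous_on_IFSmap) auto
  moreover have "IFS_orbit p q \<subseteq> ?U"
  proof
    fix x assume "x \<in> IFS_orbit p q"
    then show "x \<in> ?U"
    proof cases
      case zero
      have "x = IFSmap p q 1 0" "0 \<in> ?K"
        using zero IFS_orbit.zero closure_subset by (auto simp: IFSmap_real)
      then show ?thesis
        by (intro UN_I[of 1]) auto
    next
      case (step y i)
      then show ?thesis
        using closure_subset by blast
    qed
  qed
  ultimately show "?K \<subseteq> ?U"
    by (rule closure_minimal[rotated])
qed

lemma attractor_eq_closure_IFS_orbit: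
  assumes "p \<in> {0..1/2}" "q \<in> {0..1/2}"
  shows "attractor p q = closure (IFS_orbit p q)"
  unfolding attractor_def
proof (rule the_equality)
  have "IFS_orbit p q \<noteq> {}"
    using IFS_orbit.zero by blast
  moreover have "compact (closure (IFS_orbit p q))"
    using assms by (intro compact_closure_IFS_orbit) auto
  moreover have "closure (IFS_orbit p q) = (\<Union>i\<in>{1..4::nat}. IFSmap p q i ` closure (IFS_orbit p q))"
    using assms by (intro closure_IFS_orbit_invariant) auto
  ultimately show "closure (IFS_orbit p q) \<noteq> {} \<and> compact (closure (IFS_orbit p q)) \<and>
      closure (IFS_orbit p q) = (\<Union>i\<in>{1..4::nat}. IFSmap p q i ` closure (IFS_orbit p q))"
    by simp
qed (use IFS_invariant_compact_eq_closure_orbit[OF assms] in blast)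

lemma affine_conjugacy_on_orbit_of_zero:
  fixes H :: "'a::real_field \<Rightarrow> 'b::real_field"
  assumes "p \<noteq> 0" "p' \<noteq> 1"
    and scale: "\<And>z. H (of_real p * z) = of_real p' * H z"
    and affine: "\<And>z. H (of_real p * z + of_real (1 - p)) = of_real p' * H z + of_real (1 - p')"
  shows "H (of_real (p ^ k * real n * (1 - p))) = of_real (p' ^ k * real n * (1 - p'))"
proof -
  have "H 0 = of_real p' * H 0"
    using scale[of 0] by simp
  then have H0: "H 0 = 0"
    using \<open>p' \<noteq> 1\<close> by (metis mult_cancel_right2 of_real_eq_1_iff)
  have shift: "H (w + of_real (1 - p)) = H w + of_real (1 - p')" for w
    using affine[of "w / of_real p"] scale[of "w / of_real p"] \<open>p \<noteq> 0\<close> by simp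
  have Hn: "H (of_nat n * of_real (1 - p)) = of_nat n * of_real (1 - p')" for n
  proof (induction n)
    case (Suc n)
    have "H (of_nat (Suc n) * of_real (1 - p)) = H (of_nat n * of_real (1 - p) + of_real (1 - p))"
      by (simp add: algebra_simps)
    then show ?case
      using Suc shift by (simp add: distrib_right)
  qed (simp add: H0)
  have Hk: "H (of_real p ^ k * w) = of_real p' ^ k * H w" for k w
    by (induction k) (simp_all add: scale mult.assoc)
  show ?thesis
    using Hk[of k "of_nat n * of_real (1 - p)"] Hn[of n] by (simp add: mult.assoc)
qed

lemma affine_conjugacy_ratio_le:
  fixes H :: "'a::{real_normed_field,heine_borel} \<Rightarrow> 'b::real_normed_field"
  assumes p: "0 < p" "p < 1" and p': "0 < p'" "p' < 1"
    and cont: "continuous_on UNIV H"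
    and scale: "\<And>z. H (of_real p * z) = of_real p' * H z"
    and affine: "\<And>z. H (of_real p * z + of_real (1 - p)) = of_real p' * H z + of_real (1 - p')"
  shows "p' \<le> p"
proof (rule ccontr)
  assume "\<not> p' \<le> p"
  then have "1 < p' / p"
    using p by simp
  obtain M where M: "\<And>z. z \<in> cball 0 1 \<Longrightarrow> norm (H z) \<le> M"
    using compact_imp_bounded[OF compact_continuous_image[OF continuous_on_subset[OF cont]]]
    by (metis bounded_iff compact_cball image_eqI subset_UNIV)
  obtain k where k: "M / (1 - p') + 1 < (p' / p) ^ k"
    using real_arch_pow[OF \<open>1 < p' / p\<close>] by blast
  text \<open>The points \<open>p^k \<lfloor>p^-k\<rfloor> (1 - p)\<close> stay in \<open>[0,1]\<close>, while their images
    \<open>p'^k \<lfloor>p^-k\<rfloor> (1 - p')\<close> grow like \<open>(p'/p)^k\<close>.\<close>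
  define n where "n = nat \<lfloor>1 / p ^ k\<rfloor>"
  have "0 < p ^ k"
    using p by simp
  then have "real n = of_int \<lfloor>1 / p ^ k\<rfloor>"
    by (simp add: n_def)
  then have n: "1 / p ^ k - 1 < real n" "real n \<le> 1 / p ^ k"
    using floor_correct[of "1 / p ^ k"] by linarith+
  have "p ^ k * real n \<le> 1"
    using n(2) \<open>0 < p ^ k\<close> by (simp add: field_simps)
  then have "\<bar>p ^ k * real n * (1 - p)\<bar> \<le> 1"
    using p by (simp add: abs_mult mult_le_one)
  then have "of_real (p ^ k * real n * (1 - p)) \<in> cball (0::'a) 1"
    by (simp only: mem_cball_0 norm_of_real)
  moreover have "H (of_real (p ^ k * real n * (1 - p))) = of_real (p' ^ k * real n * (1 - p'))"
    using p p' scale affine by (intro affine_conjugacy_on_orbit_of_zero) auto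
  ultimately have "\<bar>p' ^ k * real n * (1 - p')\<bar> \<le> M"
    using M by (metis norm_of_real)
  then have "p' ^ k * real n * (1 - p') \<le> M"
    by (meson abs_ge_self order_trans)
  moreover have "M < p' ^ k * real n * (1 - p')"
  proof -
    have "(p' / p) ^ k - 1 \<le> p' ^ k * (1 / p ^ k - 1)"
      using p' by (simp add: power_divide field_simps power_le_one)
    also have "\<dots> < p' ^ k * real n"
      using n(1) p' by simp
    finally have "M / (1 - p') < p' ^ k * real n"
      using k by linarith
    then show ?thesis
      using p' by (simp add: field_simps)
  qed
  ultimately show False
    by linarith
qed

lemma conjugacy_inverse:
  assumes "\<And>z. G (F z) = z" "\<And>w. F (G w) = w" "\<And>z. F (S z) = S' (F z)"
  shows "G (S' w) = S (G w)"
  by (metis assms)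

lemma IFS_conjugacy_imp_eq_parameters:
  fixes F G :: "complex \<Rightarrow> complex"
  assumes pq: "p \<in> {0<..<1}" "q \<in> {0<..<1}" "p' \<in> {0<..<1}" "q' \<in> {0<..<1}"
    and hom: "homeomorphism UNIV UNIV F G"
    and conj: "\<And>z i. i \<in> {1..4::nat} \<Longrightarrow> F (IFSmap p q i z) = IFSmap p' q' i (F z)"
  shows "p = p' \<and> q = q'"
proof -
  have "continuous_on UNIV F" "continuous_on UNIV G"
    and GF: "\<And>z. G (F z) = z" and FG: "\<And>w. F (G w) = w"
    using hom by (auto simp: homeomorphism_def)
  have inv: "G (IFSmap p' q' i w) = IFSmap p q i (G w)" if "i \<in> {1..4}" for i w
    by (rule conjugacy_inverse[of G F]) (use GF FG conj[OF that] in auto)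
  have "p' \<le> p" "q' \<le> q"
    using pq conj[of 1] conj[of 3] conj[of 2] conj[of 4]
    by (auto intro!: affine_conjugacy_ratio_le[OF _ _ _ _ \<open>continuous_on UNIV F\<close>]
        simp: IFSmap_def)
  moreover have "p \<le> p'" "q \<le> q'"
    using pq inv[of 1] inv[of 3] inv[of 2] inv[of 4]
    by (auto intro!: affine_conjugacy_ratio_le[OF _ _ _ _ \<open>continuous_on UNIV G\<close>]
        simp: IFSmap_def)
  ultimately show ?thesis
    by simp
qed

lemma homeomorphism_closed_real_extends_to_complex:
  fixes f g :: "real \<Rightarrow> real"
  assumes "closed K" "closed K'" "homeomorphism K K' f g"
  obtains F G :: "complex \<Rightarrow> complex"
  where "homeomorphism UNIV UNIV F G" "\<And>x. x \<in> K \<Longrightarrow> F (of_real x) = of_real (f x)"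
proof -
  have "continuous_on K f" "continuous_on K' g"
    and gf: "\<And>x. x \<in> K \<Longrightarrow> g (f x) = x" and fK: "\<And>x. x \<in> K \<Longrightarrow> f x \<in> K'"
    using assms(3) by (auto simp: homeomorphism_def)
  obtain a where "continuous_on UNIV a" and a: "\<And>x. x \<in> K \<Longrightarrow> a x = f x"
    using Tietze_unbounded[OF \<open>continuous_on K f\<close>, of UNIV] assms(1) by auto
  obtain b where "continuous_on UNIV b" and b: "\<And>x. x \<in> K' \<Longrightarrow> b x = g x"
    using Tietze_unbounded[OF \<open>continuous_on K' g\<close>, of UNIV] assms(2) by auto
  text \<open>Klee's trick: \<open>F\<close> is the shear \<open>(x, y) \<mapsto> (x, y + a x)\<close>, followed by swapping
    the coordinates and by the shear \<open>(u, v) \<mapsto> (u, v - b u)\<close>.\<close>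
  define F where "F z = Complex (Im z + a (Re z)) (Re z - b (Im z + a (Re z)))" for z
  define G where "G w = Complex (Im w + b (Re w)) (Re w - a (Im w + b (Re w)))" for w
  have "continuous_on UNIV F" "continuous_on UNIV G"
    unfolding F_def G_def Complex_eq
    by (intro continuous_intros continuous_on_compose2[OF \<open>continuous_on UNIV a\<close>]
        continuous_on_compose2[OF \<open>continuous_on UNIV b\<close>]; simp)+
  moreover have "G (F z) = z" "F (G z) = z" for z
    by (simp_all add: F_def G_def complex_eq_iff)
  ultimately have "homeomorphism UNIV UNIV F G"
    by (intro homeomorphismI) auto
  moreover have "F (of_real x) = of_real (f x)" if "x \<in> K" for x
    using that by (simp add: F_def complex_eq_iff a b fK gf)
  ultimately show ?thesis
    using that by blast
qed

theorem theorem12: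
  fixes p q p' q' :: real and f :: "real \<Rightarrow> real"
  assumes "0 < p" "p < 1/2" "0 < q" "q < 1/2"
      and "0 < p'" "p' < 1/2" "0 < q'" "q' < 1/2"
      and "twofold_Cantor p q" and "twofold_Cantor p' q'"
      and "\<exists>g. homeomorphism (attractor p q) (attractor p' q') f g"
      and "\<forall>x\<in>attractor p q. \<forall>i\<in>{1..4::nat}.
             f (IFSmap p q i x) = IFSmap p' q' i (f x)"
  shows "(\<exists>F G :: complex \<Rightarrow> complex. homeomorphism UNIV UNIV F G \<and>
            (\<forall>x\<in>attractor p q. F (complex_of_real x) = complex_of_real (f x)))
       \<and> ((\<exists>F G :: complex \<Rightarrow> complex. homeomorphism UNIV UNIV F G \<and>
            (\<forall>x\<in>attractor p q. F (complex_of_real x) = complex_of_real (f x)) \<and>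
            (\<forall>z. \<forall>i\<in>{1..4::nat}. F (IFSmap p q i z) = IFSmap p' q' i (F z)))
          \<longrightarrow> p = p' \<and> q = q')"
proof (rule conjI[OF _ impI])
  obtain g where g: "homeomorphism (attractor p q) (attractor p' q') f g"
    using assms(11) by blast
  have "closed (attractor p q)" "closed (attractor p' q')"
    using assms(1-8) by (simp_all add: attractor_eq_closure_IFS_orbit)
  then show "\<exists>F G :: complex \<Rightarrow> complex. homeomorphism UNIV UNIV F G \<and>
      (\<forall>x\<in>attractor p q. F (complex_of_real x) = complex_of_real (f x))"
    by (metis homeomorphism_closed_real_extends_to_complex[OF _ _ g])
next
  assume "\<exists>F G :: complex \<Rightarrow> complex. homeomorphism UNIV UNIV F G \<and>
      (\<forall>x\<in>attractor p q. F (complex_of_real x) = complex_of_real (f x)) \<and>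
      (\<forall>z. \<forall>i\<in>{1..4::nat}. F (IFSmap p q i z) = IFSmap p' q' i (F z))"
  then obtain F G :: "complex \<Rightarrow> complex" where "homeomorphism UNIV UNIV F G"
      "\<And>z i. i \<in> {1..4::nat} \<Longrightarrow> F (IFSmap p q i z) = IFSmap p' q' i (F z)"
    by blast
  then show "p = p' \<and> q = q'"
    using assms(1-8) by (intro IFS_conjugacy_imp_eq_parameters) auto
qed

end
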